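(* Assume the setup in the context, with the fine-tuning regime and local smoothness with radius $r\ge 2\sqrt{C}$, and let $0<\epsilon\le 1$ be such that $|\langle\tau_i,\tau_j\rangle|\le\epsilon\|\tau_i\|\|\tau_j\|$ for all $i\neq j$. Let $\mathbf{W}_e\in\mathbb{R}^{T\times M}$ have every column in the probability simplex $\Delta^{T-1}$, define basis vectors $B_m=\sum_{j=1}^T\mathbf{W}_e[j,m]\tau_j$ for $m\in[M]$, let $\alpha\in\Delta^{M-1}$, and set $\theta^M_{\mathrm{Add}}=\theta_0+\sum_{m=1}^M\alpha_mB_m$. Then for every $i\in[T]$, $$\mathcal{L}_i(\theta^M_{\mathrm{Add}})-\mathcal{L}_i(\theta_i)\le L_iC(1+\epsilon).$$
   Context: Setup: $\theta_0\in\mathbb{R}^d$ is a pretrained parameter vector; $\theta_1,\dots,\theta_T\in\mathbb{R}^d$ are fine-tuned parameters and $\tau_i:=\theta_i-\theta_0$ are task vectors. For each task $i$, $\mathcal{L}_i:\mathbb{R}^d\to\mathbb{R}$ is a differentiable loss (population risk). Norms are Euclidean. Fine-tuning regime: $\nabla\mathcal{L}_i(\theta_i)=0$ for all $i\in[T]$, and there is $C>0$ with $\|\tau_i\|^2\le C$ for all $i$. Local smoothness with radius $r>0$: for each $i$ there is $L_i\ge 0$ such that for all $\theta$ with $\|\theta-\theta_i\|\le r$, $\big|\mathcal{L}_i(\theta)-\mathcal{L}_i(\theta_i)-\langle\theta-\theta_i,\nabla\mathcal{L}_i(\theta_i)\rangle\big|\le\frac{L_i}{2}\|\theta-\theta_i\|^2$.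 $\Delta^{K-1}=\{x\in\mathbb{R}^K: x\ge 0,\ \sum_k x_k=1\}$. *)

theory Defs
  imports "HOL-Analysis.Analysis"
begin

definition task_vec :: "'a::real_vector \<Rightarrow> (nat \<Rightarrow> 'a) \<Rightarrow> nat \<Rightarrow> 'a" where
  "task_vec theta0 theta i = theta i - theta0"

definition basis_vec :: "'a::real_vector \<Rightarrow> (nat \<Rightarrow> 'a) \<Rightarrow> nat \<Rightarrow> (nat \<Rightarrow> nat \<Rightarrow> real) \<Rightarrow> nat \<Rightarrow> 'a" where
  "basis_vec theta0 theta T W m = (\<Sum>j=1..T. W j m *\<^sub>R task_vec theta0 theta j)"

definition theta_add :: "'a::real_vector \<Rightarrow> (nat \<Rightarrow> 'a) \<Rightarrow> nat \<Rightarrow> nat \<Rightarrow> (nat \<Rightarrow> nat \<Rightarrow> real) \<Rightarrow> (nat \<Rightarrow> real) \<Rightarrow> 'a" where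
  "theta_add theta0 theta T M W \<alpha> = theta0 + (\<Sum>m=1..M. \<alpha> m *\<^sub>R basis_vec theta0 theta T W m)"

end

theory Submission
  imports Defs
begin

(* The merged model is theta_0 plus a convex combination of the task vectors, with weights
   c_j = sum_m alpha_m W[j,m]. Every task vector has norm at most sqrt C, so the displacement
   from theta_i has norm at most 2 sqrt C <= r and local smoothness applies at the stationary
   point theta_i. Near-orthogonality of the task vectors makes the inner product of the
   combination with tau_i at least -eps C, so the squared displacement is at most 2C(1 + eps). *)

definition effective_weight :: "nat \<Rightarrow> (nat \<Rightarrow> nat \<Rightarrow> real) \<Rightarrow> (nat \<Rightarrow> real) \<Rightarrow> nat \<Rightarrow> real" where
  "effective_weight M W \<alpha> j = (\<Sum>m=1..M. \<alpha> m * W j m)"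

lemma theta_add_eq_effective_weight_sum:
  "theta_add theta0 theta T M W \<alpha> =
     theta0 + (\<Sum>j=1..T. effective_weight M W \<alpha> j *\<^sub>R task_vec theta0 theta j)"
  unfolding theta_add_def basis_vec_def effective_weight_def
  by (simp add: scaleR_sum_right scaleR_sum_left) (rule sum.swap)

lemma effective_weight_nonneg:
  assumes "\<And>m. m \<in> {1..M} \<Longrightarrow> W j m \<ge> 0" and "\<And>m. m \<in> {1..M} \<Longrightarrow> \<alpha> m \<ge> 0"
  shows "effective_weight M W \<alpha> j \<ge> 0"
  unfolding effective_weight_def using assms by (auto intro!: sum_nonneg)

lemma sum_effective_weight:
  assumes "\<And>m. m \<in> {1..M} \<Longrightarrow> (\<Sum>j=1..T. W j m) = 1" and "(\<Sum>m=1..M. \<alpha> m) = 1"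
  shows "(\<Sum>j=1..T. effective_weight M W \<alpha> j) = 1"
proof -
  have "(\<Sum>j=1..T. effective_weight M W \<alpha> j) = (\<Sum>m=1..M. \<alpha> m * (\<Sum>j=1..T. W j m))"
    unfolding effective_weight_def sum_distrib_left by (rule sum.swap)
  also have "\<dots> = (\<Sum>m=1..M. \<alpha> m)"
    using assms(1) by simp
  finally show ?thesis
    using assms(2) by simp
qed

lemma norm_convex_combination_le:
  fixes x :: "'i \<Rightarrow> 'a::real_normed_vector"
  assumes "\<And>j. j \<in> A \<Longrightarrow> c j \<ge> 0" and "sum c A = 1"
    and "\<And>j. j \<in> A \<Longrightarrow> norm (x j) \<le> R"
  shows "norm (\<Sum>j\<in>A. c j *\<^sub>R x j) \<le> R"
proof -
  have "norm (\<Sum>j\<in>A. c j *\<^sub>R x j) \<le> (\<Sum>j\<in>A. c j * norm (x j))"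
    using norm_sum[of "\<lambda>j. c j *\<^sub>R x j" A] assms(1) by simp
  also have "\<dots> \<le> (\<Sum>j\<in>A. c j * R)"
    using assms(1,3) by (intro sum_mono mult_left_mono) auto
  also have "\<dots> = R"
    using assms(2) by (simp add: sum_distrib_right[symmetric])
  finally show ?thesis .
qed

lemma inner_convex_combination_ge:
  fixes x :: "'i \<Rightarrow> 'a::real_inner"
  assumes "\<And>j. j \<in> A \<Longrightarrow> c j \<ge> 0" and "sum c A = 1"
    and "\<And>j. j \<in> A \<Longrightarrow> b \<le> x j \<bullet> y"
  shows "b \<le> (\<Sum>j\<in>A. c j *\<^sub>R x j) \<bullet> y"
proof -
  have "b = (\<Sum>j\<in>A. c j * b)"
    using assms(2) by (simp add: sum_distrib_right[symmetric])
  also have "\<dots> \<le> (\<Sum>j\<in>A. c j * (x j \<bullet> y))"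
    using assms(1,3) by (intro sum_mono mult_left_mono) auto
  also have "\<dots> = (\<Sum>j\<in>A. c j *\<^sub>R x j) \<bullet> y"
    by (simp add: inner_sum_left)
  finally show ?thesis .
qed

lemma incoherent_inner_ge:
  fixes \<tau> :: "'i \<Rightarrow> 'a::real_inner"
  assumes "\<epsilon> \<ge> 0" and "(norm (\<tau> i))\<^sup>2 \<le> C" and "(norm (\<tau> j))\<^sup>2 \<le> C"
    and "i \<noteq> j \<Longrightarrow> \<bar>\<tau> i \<bullet> \<tau> j\<bar> \<le> \<epsilon> * norm (\<tau> i) * norm (\<tau> j)"
  shows "- (\<epsilon> * C) \<le> \<tau> j \<bullet> \<tau> i"
proof -
  have "0 \<le> C"
    using assms(2) zero_le_power2 order_trans by blast
  show ?thesis
  proof (cases "i = j")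
    case True
    have "0 \<le> \<epsilon> * C"
      using assms(1) \<open>0 \<le> C\<close> by simp
    then show ?thesis
      unfolding True using inner_ge_zero[of "\<tau> j"] by linarith
  next
    case False
    have "norm (\<tau> i) * norm (\<tau> j) \<le> sqrt C * sqrt C"
      using assms(2,3) \<open>0 \<le> C\<close> by (intro mult_mono) (auto simp: real_le_rsqrt)
    also have "\<dots> = C"
      using \<open>0 \<le> C\<close> by simp
    finally have "\<epsilon> * norm (\<tau> i) * norm (\<tau> j) \<le> \<epsilon> * C"
      using assms(1) by (metis mult.assoc mult_left_mono)
    then show ?thesis
      using assms(4)[OF False] by (simp add: inner_commute)
  qed
qed

lemma norm_diff_convex_combination_sq_le:
  fixes \<tau> :: "'i \<Rightarrow> 'a::real_inner"
  assumes "\<And>j. j \<in> A \<Longrightarrow> c j \<ge> 0" and "sum c A = 1" and "\<epsilon> \<ge> 0" and "i \<in> A"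
    and "\<And>j. j \<in> A \<Longrightarrow> (norm (\<tau> j))\<^sup>2 \<le> C"
    and "\<And>j. j \<in> A \<Longrightarrow> i \<noteq> j \<Longrightarrow> \<bar>\<tau> i \<bullet> \<tau> j\<bar> \<le> \<epsilon> * norm (\<tau> i) * norm (\<tau> j)"
  shows "(norm ((\<Sum>j\<in>A. c j *\<^sub>R \<tau> j) - \<tau> i))\<^sup>2 \<le> 2 * C * (1 + \<epsilon>)"
proof -
  define v where "v = (\<Sum>j\<in>A. c j *\<^sub>R \<tau> j)"
  have "norm v \<le> sqrt C"
    unfolding v_def using assms(1,2,5) by (intro norm_convex_combination_le) (auto simp: real_le_rsqrt)
  then have "(norm v)\<^sup>2 \<le> (sqrt C)\<^sup>2"
    by (simp add: power_mono)
  also have "\<dots> = C"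
    using assms(4,5) zero_le_power2 order_trans by (metis real_sqrt_pow2)
  finally have "(norm v)\<^sup>2 \<le> C" .
  moreover have "- (\<epsilon> * C) \<le> v \<bullet> \<tau> i"
    unfolding v_def
  proof (rule inner_convex_combination_ge[OF assms(1,2)])
    fix j
    assume "j \<in> A"
    then show "- (\<epsilon> * C) \<le> \<tau> j \<bullet> \<tau> i"
      using assms(3-6) by (intro incoherent_inner_ge) auto
  qed
  moreover have "(norm (\<tau> i))\<^sup>2 \<le> C"
    using assms(5)[OF assms(4)] .
  moreover have "(norm (v - \<tau> i))\<^sup>2 = (norm v)\<^sup>2 - 2 * (v \<bullet> \<tau> i) + (norm (\<tau> i))\<^sup>2"
    using dot_norm_neg[of v "\<tau> i"] by simp
  ultimately have "(norm (v - \<tau> i))\<^sup>2 \<le> 2 * C * (1 + \<epsilon>)"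
    by (simp add: algebra_simps)
  then show ?thesis
    unfolding v_def .
qed

lemma loss_gap_le_at_stationary:
  assumes "grad \<theta> = 0"
    and "\<bar>Loss x - Loss \<theta> - (x - \<theta>) \<bullet> grad \<theta>\<bar> \<le> L / 2 * (norm (x - \<theta>))\<^sup>2"
  shows "Loss x - Loss \<theta> \<le> L / 2 * (norm (x - \<theta>))\<^sup>2"
  using assms abs_ge_self[of "Loss x - Loss \<theta>"] by simp

theorem mainTheorem5:
  fixes theta0 :: "'a::euclidean_space"
    and theta :: "nat \<Rightarrow> 'a"
    and Loss :: "nat \<Rightarrow> 'a \<Rightarrow> real"
    and grad :: "nat \<Rightarrow> 'a \<Rightarrow> 'a"
    and Lsm :: "nat \<Rightarrow> real"
    and T M :: nat
    and C r \<epsilon> :: real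
    and W :: "nat \<Rightarrow> nat \<Rightarrow> real"
    and \<alpha> :: "nat \<Rightarrow> real"
  assumes diff: "\<And>i x. i \<in> {1..T} \<Longrightarrow> (Loss i has_derivative (\<lambda>h. grad i x \<bullet> h)) (at x)"
    and stationary: "\<And>i. i \<in> {1..T} \<Longrightarrow> grad i (theta i) = 0"
    and Cpos: "C > 0"
    and taubound: "\<And>i. i \<in> {1..T} \<Longrightarrow> (norm (task_vec theta0 theta i))\<^sup>2 \<le> C"
    and rpos: "r > 0"
    and rbound: "r \<ge> 2 * sqrt C"
    and Lsm_nonneg: "\<And>i. i \<in> {1..T} \<Longrightarrow> Lsm i \<ge> 0"
    and smooth: "\<And>i x. i \<in> {1..T} \<Longrightarrow> norm (x - theta i) \<le> r \<Longrightarrow>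
        \<bar>Loss i x - Loss i (theta i) - (x - theta i) \<bullet> grad i (theta i)\<bar>
          \<le> Lsm i / 2 * (norm (x - theta i))\<^sup>2"
    and eps_pos: "0 < \<epsilon>" and eps_le: "\<epsilon> \<le> 1"
    and incoh: "\<And>i j. i \<in> {1..T} \<Longrightarrow> j \<in> {1..T} \<Longrightarrow> i \<noteq> j \<Longrightarrow>
        \<bar>task_vec theta0 theta i \<bullet> task_vec theta0 theta j\<bar> \<le> \<epsilon> * norm (task_vec theta0 theta i) * norm (task_vec theta0 theta j)"
    and W_nonneg: "\<And>j m. j \<in> {1..T} \<Longrightarrow> m \<in> {1..M} \<Longrightarrow> W j m \<ge> 0"
    and W_sum: "\<And>m. m \<in> {1..M} \<Longrightarrow> (\<Sum>j=1..T. W j m) = 1"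
    and alpha_nonneg: "\<And>m. m \<in> {1..M} \<Longrightarrow> \<alpha> m \<ge> 0"
    and alpha_sum: "(\<Sum>m=1..M. \<alpha> m) = 1"
    and i_in: "i \<in> {1..T}"
  shows "Loss i (theta_add theta0 theta T M W \<alpha>) - Loss i (theta i) \<le> Lsm i * C * (1 + \<epsilon>)"
proof -
  define \<tau> where "\<tau> = task_vec theta0 theta"
  define c where "c = effective_weight M W \<alpha>"
  define d where "d = theta_add theta0 theta T M W \<alpha> - theta i"
  have c_nonneg: "\<And>j. j \<in> {1..T} \<Longrightarrow> c j \<ge> 0"
    unfolding c_def by (auto intro!: effective_weight_nonneg W_nonneg alpha_nonneg)
  have c_sum: "sum c {1..T} = 1"
    unfolding c_def using W_sum alpha_sum by (rule sum_effective_weight)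
  have d_eq: "d = (\<Sum>j=1..T. c j *\<^sub>R \<tau> j) - \<tau> i"
    unfolding d_def c_def \<tau>_def theta_add_eq_effective_weight_sum task_vec_def by simp
  have norm_\<tau>: "norm (\<tau> j) \<le> sqrt C" if "j \<in> {1..T}" for j
    using taubound[OF that] by (simp add: \<tau>_def real_le_rsqrt)
  have "norm (\<Sum>j=1..T. c j *\<^sub>R \<tau> j) \<le> sqrt C"
    using c_nonneg c_sum norm_\<tau> by (rule norm_convex_combination_le)
  then have "norm d \<le> 2 * sqrt C"
    unfolding d_eq using norm_triangle_ineq4[of "\<Sum>j=1..T. c j *\<^sub>R \<tau> j" "\<tau> i"] norm_\<tau>[OF i_in]
    by linarith
  then have "norm d \<le> r"
    using rbound by linarith
  then have "Loss i (theta i + d) - Loss i (theta i) \<le> Lsm i / 2 * (norm d)\<^sup>2"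
    using loss_gap_le_at_stationary[where grad = "grad i" and \<theta> = "theta i" and Loss = "Loss i"
        and x = "theta i + d" and L = "Lsm i"]
      stationary[OF i_in] smooth[OF i_in, of "theta i + d"]
    by simp
  also have "\<dots> \<le> Lsm i / 2 * (2 * C * (1 + \<epsilon>))"
  proof (rule mult_left_mono)
    show "(norm d)\<^sup>2 \<le> 2 * C * (1 + \<epsilon>)"
      unfolding d_eq using c_nonneg c_sum eps_pos i_in taubound[folded \<tau>_def]
      by (intro norm_diff_convex_combination_sq_le[where A = "{1..T}"] incoh[OF i_in, folded \<tau>_def]) auto
    show "0 \<le> Lsm i / 2"
      using Lsm_nonneg[OF i_in] by simp
  qed
  finally show ?thesis
    unfolding d_def by simp
qed

end
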